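(* Let $H$ be an ASC-hypergraph and $M\subseteq H$. Then the following are equivalent: (a) every $M$-antichain misses $H$, and $|M|=|\bigcup H|$; (b) $M$ is a construction of $H$.
   Context: A hypergraph is a finite set $H$ of nonempty subsets of some finite set; its carrier is $\bigcup H$. For a family $F$ and set $Y$, $F_Y=\{X\in F\mid X\subseteq Y\}$. A hypergraph partition of $H$ is a partition $\{H_1,\dots,H_n\}$ ($n\ge0$) of the set $H$ with $\{\bigcup H_1,\dots,\bigcup H_n\}$ a partition of $\bigcup H$; $H$ is connected if it has exactly one hypergraph partition (the empty hypergraph is connected); the finest hypergraph partition is the unique one whose blocks are connected. $H$ is atomic if $\{x\}\in H$ for all $x\in\bigcup H$; saturated if $X_1,X_2\in H$ with $X_1\cap X_2\neq\emptyset$ imply $X_1\cup X_2\in H$. An ASC-hypergraph is one that is atomic, saturated and connected. Constructions of an atomic $H$, by induction on $|\bigcup H|$: (0) $\emptyset$ is the only construction of $\emptyset$; (1) if $|\bigcup H|\ge1$, $H$ connected, $x\in\bigcup H$, $K$ a construction of $H_{\bigcup H\setminus\{x\}}$, then $K\cup\{\bigcup H\}$ is a construction of $H$; (2) if $H$ is not connected with finest hypergraph partition $\{H_1,\dots,H_n\}$, $n\ge2$, and $K_i$ is a construction of $H_i$, then $K_1\cup\dots\cup K_n$ is a construction of $H$. For $M\subseteq H$, an $M$-antichain is a subset $S\subseteq M$ with $|S|\ge2$ such that no member of $S$ is a subset of another member of $S$; it misses $H$ when $\bigcup S\notin H$. *)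

theory Defs
  imports "HOL-Library.Disjoint_Sets"
begin

definition hypergraph :: "'a set set \<Rightarrow> bool" where
  "hypergraph H \<longleftrightarrow> finite H \<and> (\<forall>X\<in>H. X \<noteq> {} \<and> finite X)"

definition restr :: "'a set set \<Rightarrow> 'a set \<Rightarrow> 'a set set" where
  "restr F Y = {X \<in> F. X \<subseteq> Y}"

text \<open>A hypergraph partition: a partition P of H such that the carriers of the
  (distinct) blocks form a partition of the carrier of H (indexed family, hence inj_on).\<close>
definition hpartition :: "'a set set \<Rightarrow> 'a set set set \<Rightarrow> bool" where
  "hpartition H P \<longleftrightarrow> partition_on H P \<and> partition_on (\<Union>H) (Union ` P) \<and> inj_on Union P"

definition hconnected :: "'a set set \<Rightarrow> bool" where
  "hconnected H \<longleftrightarrow> (\<exists>!P. hpartition H P)"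

definition finest_hpartition :: "'a set set \<Rightarrow> 'a set set set \<Rightarrow> bool" where
  "finest_hpartition H P \<longleftrightarrow> hpartition H P \<and> (\<forall>B\<in>P. hconnected B)"

definition atomic :: "'a set set \<Rightarrow> bool" where
  "atomic H \<longleftrightarrow> (\<forall>x\<in>\<Union>H. {x} \<in> H)"

definition saturated :: "'a set set \<Rightarrow> bool" where
  "saturated H \<longleftrightarrow> (\<forall>X1\<in>H. \<forall>X2\<in>H. X1 \<inter> X2 \<noteq> {} \<longrightarrow> X1 \<union> X2 \<in> H)"

definition ASC :: "'a set set \<Rightarrow> bool" where
  "ASC H \<longleftrightarrow> atomic H \<and> saturated H \<and> hconnected H"

inductive construction :: "'a set set \<Rightarrow> 'a set set \<Rightarrow> bool" where
  empty: "construction {} {}"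
| conn: "\<lbrakk>hypergraph H; atomic H; \<Union>H \<noteq> {}; hconnected H; x \<in> \<Union>H;
          construction (restr H (\<Union>H - {x})) K\<rbrakk>
         \<Longrightarrow> construction H (insert (\<Union>H) K)"
| disc: "\<lbrakk>hypergraph H; atomic H; \<not> hconnected H; finest_hpartition H P; card P \<ge> 2;
          \<forall>B\<in>P. construction B (Ks B)\<rbrakk>
         \<Longrightarrow> construction H (\<Union>B\<in>P. Ks B)"

definition antichain :: "'a set set \<Rightarrow> 'a set set \<Rightarrow> bool" where
  "antichain M S \<longleftrightarrow> S \<subseteq> M \<and> 2 \<le> card S \<and> (\<forall>X\<in>S. \<forall>Y\<in>S. X \<subseteq> Y \<longrightarrow> X = Y)"

definition misses :: "'a set set \<Rightarrow> 'a set set \<Rightarrow> bool" where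
  "misses H S \<longleftrightarrow> \<Union>S \<notin> H"

end

theory Submission
  imports Defs
begin

(* Completeness ((a) \<Longrightarrow> construction) is proved for all atomic saturated
   hypergraphs, by strong induction on the size of the carrier V = \<Union>H.  The key
   counting fact is |M| \<le> |\<Union>M| (every member of M has a private point not covered
   by its proper sub-members).  If V \<in> H, then this count forces V \<in> M and a point
   x \<in> V not covered by M - {V}; recurse on H restricted to V - {x}.  Otherwise the
   maximal edges of H are disjoint and split H into its connected components,
   which form the finest hypergraph partition; counting shows that M restricted
   to each component has the right size, and we recurse on the components. *)

definition antichains_miss :: "'a set set \<Rightarrow> 'a set set \<Rightarrow> bool" where
  "antichains_miss H M \<longleftrightarrow> (\<forall>S. antichain M S \<longrightarrow> misses H S)"

lemma antichains_miss_mono: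
  assumes "antichains_miss H M" "K \<subseteq> M" "H' \<subseteq> H"
  shows "antichains_miss H' K"
  unfolding antichains_miss_def
proof (intro allI impI)
  fix S assume "antichain K S"
  hence "antichain M S" using assms(2) unfolding antichain_def by blast
  hence "\<Union>S \<notin> H" using assms(1) unfolding antichains_miss_def misses_def by simp
  thus "misses H' S" using assms(3) unfolding misses_def by blast
qed

lemma restr_subset: "restr H Y \<subseteq> H"
  unfolding restr_def by auto

lemma hypergraph_restr: "hypergraph H \<Longrightarrow> hypergraph (restr H Y)"
  unfolding hypergraph_def restr_def by auto

lemma atomic_restr: "atomic H \<Longrightarrow> atomic (restr H Y)"
  unfolding atomic_def restr_def by blast

lemma saturated_restr: "saturated H \<Longrightarrow> saturated (restr H Y)"
  unfolding saturated_def restr_def by auto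

(* In an atomic hypergraph, restricting to a subset of the carrier keeps
   exactly that subset as carrier (the singletons survive). *)
lemma Union_restr:
  assumes "atomic H" and "Y \<subseteq> \<Union>H"
  shows "\<Union>(restr H Y) = Y"
proof
  show "\<Union>(restr H Y) \<subseteq> Y" unfolding restr_def by auto
  show "Y \<subseteq> \<Union>(restr H Y)"
  proof
    fix y assume "y \<in> Y"
    hence "{y} \<in> restr H Y" using assms unfolding atomic_def restr_def by auto
    thus "y \<in> \<Union>(restr H Y)" by blast
  qed
qed

definition maximal_members :: "'a set set \<Rightarrow> 'a set set" where
  "maximal_members F = {Y \<in> F. \<forall>Z\<in>F. Y \<subseteq> Z \<longrightarrow> Y = Z}"

lemma maximal_members_subset: "maximal_members F \<subseteq> F"
  unfolding maximal_members_def by auto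

lemma maximal_member_above:
  "finite F \<Longrightarrow> Y \<in> F \<Longrightarrow> \<exists>Z\<in>maximal_members F. Y \<subseteq> Z"
  using finite_has_maximal2[of F Y] unfolding maximal_members_def by auto

lemma Union_maximal_members: "finite F \<Longrightarrow> \<Union>(maximal_members F) = \<Union>F"
  using maximal_member_above[of F] maximal_members_subset[of F] by blast

lemma antichain_maximal_members:
  "F \<subseteq> M \<Longrightarrow> 2 \<le> card (maximal_members F) \<Longrightarrow> antichain M (maximal_members F)"
  unfolding antichain_def maximal_members_def by auto

lemma maximal_members_disjoint:
  assumes "saturated H" "Z1 \<in> maximal_members H" "Z2 \<in> maximal_members H" "Z1 \<noteq> Z2"
  shows "Z1 \<inter> Z2 = {}"
proof (rule ccontr)
  assume "Z1 \<inter> Z2 \<noteq> {}"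
  hence "Z1 \<union> Z2 \<in> H"
    using assms(1-3) maximal_members_subset unfolding saturated_def by blast
  hence "Z1 = Z1 \<union> Z2" "Z2 = Z1 \<union> Z2"
    using assms(2,3) unfolding maximal_members_def by auto
  thus False using assms(4) by simp
qed

(* If a union of members of M lies in H, it is itself one of those members:
   otherwise the maximal ones among them form an antichain whose union is in H. *)
lemma Union_in_family:
  assumes anti: "antichains_miss H M"
    and "F \<subseteq> M" "finite F" "\<Union>F \<in> H" "\<Union>F \<noteq> {}"
  shows "\<Union>F \<in> F"
proof (rule ccontr)
  assume nin: "\<Union>F \<notin> F"
  define S where "S = maximal_members F"
  have US: "\<Union>S = \<Union>F" using Union_maximal_members assms(3) S_def by simp
  have "finite S" using assms(3) maximal_members_subset finite_subset S_def by metis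
  have "card S \<noteq> 0" using \<open>finite S\<close> US assms(5) by auto
  moreover have "card S \<noteq> 1"
    using US nin maximal_members_subset[of F] S_def by (auto simp: card_Suc_eq)
  ultimately have "antichain M S"
    using antichain_maximal_members[OF assms(2)] S_def by simp
  thus False using anti assms(4) US unfolding antichains_miss_def misses_def by auto
qed

lemma nested_or_disjoint:
  assumes "saturated H" "M \<subseteq> H" "antichains_miss H M" "X \<in> M" "Y \<in> M"
    and "X \<inter> Y \<noteq> {}"
  shows "X \<subseteq> Y \<or> Y \<subseteq> X"
proof (rule ccontr)
  assume "\<not> (X \<subseteq> Y \<or> Y \<subseteq> X)"
  moreover from this have "X \<noteq> Y" by auto
  ultimately have "antichain M {X, Y}" using assms(4,5) unfolding antichain_def by auto
  hence "X \<union> Y \<notin> H" using assms(3) unfolding antichains_miss_def misses_def by auto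
  moreover have "X \<union> Y \<in> H" using assms(1,2,4-6) unfolding saturated_def by auto
  ultimately show False by simp
qed

(* The counting bound |M| \<le> |\<Union>M|: each X \<in> M has a point outside all its proper
   sub-members in M, and by laminarity distinct members get distinct points. *)
lemma card_le_card_Union:
  assumes hyp: "hypergraph H" and sat: "saturated H" and MH: "M \<subseteq> H"
    and anti: "antichains_miss H M"
  shows "card M \<le> card (\<Union>M)"
proof -
  have finM: "finite M" using hyp MH finite_subset unfolding hypergraph_def by blast
  define below where "below X = \<Union>{Y\<in>M. Y \<subset> X}" for X
  have private_point: "X - below X \<noteq> {}" if X: "X \<in> M" for X
  proof
    assume "X - below X = {}"
    hence U: "\<Union>{Y\<in>M. Y \<subset> X} = X" unfolding below_def by blast
    have "X \<in> H" "X \<noteq> {}" using X MH hyp unfolding hypergraph_def by auto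
    hence "X \<in> {Y\<in>M. Y \<subset> X}"
      using Union_in_family[OF anti, of "{Y\<in>M. Y \<subset> X}"] U finM by simp
    thus False by simp
  qed
  define f where "f X = (SOME a. a \<in> X - below X)" for X
  have fX: "f X \<in> X - below X" if "X \<in> M" for X
    unfolding f_def using private_point[OF that] by (metis some_in_eq)
  have "inj_on f M"
  proof (rule inj_onI, rule ccontr)
    fix X Y assume X: "X \<in> M" and Y: "Y \<in> M" and eq: "f X = f Y" and "X \<noteq> Y"
    have "f X \<in> X" "f Y \<in> Y" using fX X Y by auto
    hence "X \<inter> Y \<noteq> {}" using eq by auto
    hence "X \<subset> Y \<or> Y \<subset> X"
      using nested_or_disjoint[OF sat MH anti X Y] \<open>X \<noteq> Y\<close> by auto
    thus False
    proof
      assume "X \<subset> Y"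
      hence "f X \<in> below Y" using fX[OF X] X unfolding below_def by blast
      thus False using fX[OF Y] eq by simp
    next
      assume "Y \<subset> X"
      hence "f Y \<in> below X" using fX[OF Y] Y unfolding below_def by blast
      thus False using fX[OF X] eq by simp
    qed
  qed
  moreover have "f ` M \<subseteq> \<Union>M" using fX by blast
  moreover have "finite (\<Union>M)" using finM MH hyp unfolding hypergraph_def by auto
  ultimately show ?thesis by (rule card_inj_on_le)
qed

lemma hpartition_block_subset: "hpartition H P \<Longrightarrow> B \<in> P \<Longrightarrow> B \<subseteq> H"
  unfolding hpartition_def partition_on_def by auto

lemma hpartition_carriers_disjoint:
  assumes "hpartition H P" "B1 \<in> P" "B2 \<in> P" "B1 \<noteq> B2"
  shows "\<Union>B1 \<inter> \<Union>B2 = {}"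
proof -
  have "\<Union>B1 \<noteq> \<Union>B2" using assms unfolding hpartition_def inj_on_def by auto
  thus ?thesis using assms(1-3) unfolding hpartition_def partition_on_def disjoint_def by auto
qed

lemma hpartition_trivial:
  assumes "hypergraph H" "H \<noteq> {}"
  shows "hpartition H {H}"
  using assms unfolding hpartition_def hypergraph_def
  by (auto intro: partition_on_space)

(* A hypergraph having its carrier as an edge is connected: the block containing
   that edge covers the whole carrier, leaving no room for other blocks. *)
lemma hconnected_if_carrier_edge:
  assumes hyp: "hypergraph B" and inB: "\<Union>B \<in> B"
  shows "hconnected B"
proof -
  have only: "Q = {B}" if Q: "hpartition B Q" for Q
  proof -
    have pQ: "partition_on B Q" using Q unfolding hpartition_def by simp
    obtain Q0 where Q0: "Q0 \<in> Q" "\<Union>B \<in> Q0" using pQ inB unfolding partition_on_def by auto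
    have "Q1 = Q0" if Q1: "Q1 \<in> Q" for Q1
    proof (rule ccontr)
      assume "Q1 \<noteq> Q0"
      hence dj: "\<Union>Q1 \<inter> \<Union>Q0 = {}" using hpartition_carriers_disjoint[OF Q Q1 Q0(1)] by simp
      have "Q1 \<noteq> {}" using pQ Q1 unfolding partition_on_def by auto
      then obtain X where "X \<in> Q1" by blast
      moreover have "X \<in> B" using \<open>X \<in> Q1\<close> hpartition_block_subset[OF Q Q1] by blast
      ultimately show False using dj Q0 hyp unfolding hypergraph_def by blast
    qed
    hence "Q = {Q0}" using Q0 by blast
    thus ?thesis using pQ unfolding partition_on_def by auto
  qed
  show ?thesis unfolding hconnected_def
    using hpartition_trivial[OF hyp] inB only by blast
qed

subsection \<open>Soundness: constructions satisfy the antichain condition\<close>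

definition construction_inv :: "'a set set \<Rightarrow> 'a set set \<Rightarrow> bool" where
  "construction_inv H K \<longleftrightarrow> (\<forall>X\<in>K. X \<noteq> {} \<and> X \<subseteq> \<Union>H) \<and> finite K
     \<and> card K = card (\<Union>H) \<and> antichains_miss H K"

(* An antichain of a family with a greatest element T avoids T, since it has a
   second member, which lies below T. *)
lemma antichain_below_top:
  assumes S: "antichain (insert T K) S" and below: "\<forall>X\<in>K. X \<subseteq> T"
  shows "antichain K S"
proof -
  have "S \<subseteq> K"
  proof
    fix Y assume Y: "Y \<in> S"
    have "\<not> S \<subseteq> {Y}" using S card_mono[of "{Y}" S] unfolding antichain_def by auto
    then obtain Z where Z: "Z \<in> S" "Z \<noteq> Y" by blast
    show "Y \<in> K"
    proof (rule ccontr)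
      assume "Y \<notin> K"
      hence "Y = T" using S Y unfolding antichain_def by auto
      moreover from this have "Z \<in> K" using S Z unfolding antichain_def by auto
      ultimately have "Z \<subseteq> Y" using below by auto
      thus False using S Y Z unfolding antichain_def by blast
    qed
  qed
  thus ?thesis using S unfolding antichain_def by auto
qed

(* Adding the carrier on top of a construction K of H restricted to \<Union>H - {x}:
   an antichain cannot contain the carrier (which contains everything else),
   so it lies in K and its union avoids x. *)
lemma construction_inv_insert_carrier:
  assumes hyp: "hypergraph H" and at: "atomic H" and x: "x \<in> \<Union>H"
    and K_inv: "construction_inv (restr H (\<Union>H - {x})) K"
  shows "construction_inv H (insert (\<Union>H) K)"
proof -
  have U': "\<Union>(restr H (\<Union>H - {x})) = \<Union>H - {x}" using Union_restr[OF at] by blast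
  have Ksub: "\<forall>X\<in>K. X \<noteq> {} \<and> X \<subseteq> \<Union>H - {x}" and finK: "finite K"
    and cK: "card K = card (\<Union>H - {x})"
    and antiK: "antichains_miss (restr H (\<Union>H - {x})) K"
    using K_inv U' unfolding construction_inv_def by auto
  have finU: "finite (\<Union>H)" using hyp unfolding hypergraph_def by auto
  have nin: "\<Union>H \<notin> K"
  proof
    assume "\<Union>H \<in> K"
    hence "\<Union>H \<subseteq> \<Union>H - {x}" using Ksub by simp
    from subsetD[OF this x] show False by simp
  qed
  have "card (insert (\<Union>H) K) = Suc (card (\<Union>H - {x}))" using finK cK nin by simp
  also have "\<dots> = card (\<Union>H)" using card_Suc_Diff1[OF finU x] .
  finally have card: "card (insert (\<Union>H) K) = card (\<Union>H)" .
  have "antichains_miss H (insert (\<Union>H) K)"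
    unfolding antichains_miss_def
  proof (intro allI impI)
    fix S assume "antichain (insert (\<Union>H) K) S"
    moreover have "\<forall>X\<in>K. X \<subseteq> \<Union>H" using Ksub by blast
    ultimately have S: "antichain K S" by (rule antichain_below_top)
    hence "\<Union>S \<notin> restr H (\<Union>H - {x})"
      using antiK unfolding antichains_miss_def misses_def by auto
    moreover have "\<Union>S \<subseteq> \<Union>H - {x}" using S Ksub unfolding antichain_def by auto
    ultimately show "misses H S" unfolding restr_def misses_def by auto
  qed
  moreover have "\<forall>X\<in>insert (\<Union>H) K. X \<noteq> {} \<and> X \<subseteq> \<Union>H" using Ksub x by blast
  ultimately show ?thesis using finK card unfolding construction_inv_def by simp
qed

lemma hpartition_same_block:
  assumes "hpartition H P" "B1 \<in> P" "B2 \<in> P" "X \<noteq> {}" "X \<subseteq> \<Union>B1" "X \<subseteq> \<Union>B2"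
  shows "B1 = B2"
  using hpartition_carriers_disjoint[OF assms(1-3)] assms(4-6) by blast

lemma card_UN_blocks:
  assumes hyp: "hypergraph H" and hp: "hpartition H P"
    and Ksub: "\<And>B X. B \<in> P \<Longrightarrow> X \<in> Ks B \<Longrightarrow> X \<noteq> {} \<and> X \<subseteq> \<Union>B"
    and finKs: "\<And>B. B \<in> P \<Longrightarrow> finite (Ks B)"
    and cardKs: "\<And>B. B \<in> P \<Longrightarrow> card (Ks B) = card (\<Union>B)"
  shows "card (\<Union>B\<in>P. Ks B) = card (\<Union>H)"
proof -
  have finH: "finite H" and finU: "finite (\<Union>H)" using hyp unfolding hypergraph_def by auto
  have finP: "finite P"
    using hp finH unfolding hpartition_def partition_on_def by (metis finite_UnionD)
  have "Ks B1 \<inter> Ks B2 = {}" if "B1 \<in> P" "B2 \<in> P" "B1 \<noteq> B2" for B1 B2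
  proof (intro equalityI subsetI)
    fix X assume "X \<in> Ks B1 \<inter> Ks B2"
    hence "X \<noteq> {}" "X \<subseteq> \<Union>B1" "X \<subseteq> \<Union>B2" using Ksub that(1,2) by auto
    thus "X \<in> {}" using hpartition_same_block[OF hp that(1,2)] that(3) by simp
  qed simp
  hence "card (\<Union>B\<in>P. Ks B) = (\<Sum>B\<in>P. card (Ks B))"
    by (intro card_UN_disjoint finP) (auto simp: finKs)
  also have "\<dots> = (\<Sum>B\<in>P. card (\<Union>B))" using cardKs by simp
  also have "\<dots> = card (\<Union>B\<in>P. \<Union>B)"
  proof (rule card_UN_disjoint[symmetric, OF finP])
    show "\<forall>B\<in>P. finite (\<Union>B)"
      using hpartition_block_subset[OF hp] finU by (meson Union_mono finite_subset)
    show "\<forall>B1\<in>P. \<forall>B2\<in>P. B1 \<noteq> B2 \<longrightarrow> \<Union>B1 \<inter> \<Union>B2 = {}"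
      using hpartition_carriers_disjoint[OF hp] by blast
  qed
  also have "(\<Union>B\<in>P. \<Union>B) = \<Union>H"
    using hp unfolding hpartition_def partition_on_def by auto
  finally show ?thesis .
qed

(* An antichain of the glued family whose union is an edge lies in a single block,
   so the antichain condition is inherited from the blocks. *)
lemma antichains_miss_UN_blocks:
  assumes hp: "hpartition H P"
    and Ksub: "\<And>B X. B \<in> P \<Longrightarrow> X \<in> Ks B \<Longrightarrow> X \<noteq> {} \<and> X \<subseteq> \<Union>B"
    and antiKs: "\<And>B. B \<in> P \<Longrightarrow> antichains_miss B (Ks B)"
  shows "antichains_miss H (\<Union>B\<in>P. Ks B)"
  unfolding antichains_miss_def misses_def
proof (intro allI impI notI)
  fix S assume S: "antichain (\<Union>B\<in>P. Ks B) S" and inH: "\<Union>S \<in> H"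
  from inH obtain B0 where B0: "B0 \<in> P" "\<Union>S \<in> B0"
    using hp unfolding hpartition_def partition_on_def by auto
  have "S \<subseteq> Ks B0"
  proof
    fix X assume X: "X \<in> S"
    then obtain B1 where B1: "B1 \<in> P" "X \<in> Ks B1" using S unfolding antichain_def by auto
    have "X \<subseteq> \<Union>B0" using X B0(2) by auto
    hence "B1 = B0" using hpartition_same_block[OF hp B1(1) B0(1)] Ksub[OF B1] by blast
    thus "X \<in> Ks B0" using B1 by simp
  qed
  hence "antichain (Ks B0) S" using S unfolding antichain_def by auto
  hence "\<Union>S \<notin> B0" using antiKs[OF B0(1)] unfolding antichains_miss_def misses_def by simp
  thus False using B0(2) by contradiction
qed

lemma construction_inv_union:
  assumes hyp: "hypergraph H" and hp: "hpartition H P"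
    and Ks_inv: "\<And>B. B \<in> P \<Longrightarrow> construction_inv B (Ks B)"
  shows "construction_inv H (\<Union>B\<in>P. Ks B)"
proof -
  have Ksub: "\<And>B X. B \<in> P \<Longrightarrow> X \<in> Ks B \<Longrightarrow> X \<noteq> {} \<and> X \<subseteq> \<Union>B"
    and finKs: "\<And>B. B \<in> P \<Longrightarrow> finite (Ks B)"
    and cardKs: "\<And>B. B \<in> P \<Longrightarrow> card (Ks B) = card (\<Union>B)"
    and antiKs: "\<And>B. B \<in> P \<Longrightarrow> antichains_miss B (Ks B)"
    using Ks_inv unfolding construction_inv_def by auto
  have finP: "finite P"
    using hp hyp unfolding hpartition_def partition_on_def hypergraph_def by (metis finite_UnionD)
  have "\<forall>X\<in>(\<Union>B\<in>P. Ks B). X \<noteq> {} \<and> X \<subseteq> \<Union>H"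
    using Ksub hpartition_block_subset[OF hp] by blast
  moreover have "finite (\<Union>B\<in>P. Ks B)" using finP finKs by blast
  ultimately show ?thesis
    using card_UN_blocks[OF hyp hp Ksub finKs cardKs] antichains_miss_UN_blocks[OF hp Ksub antiKs]
    unfolding construction_inv_def by simp
qed

lemma construction_inv_if_construction:
  "construction H K \<Longrightarrow> construction_inv H K"
proof (induction rule: construction.induct)
  case empty
  show ?case by (auto simp: construction_inv_def antichains_miss_def antichain_def)
next
  case (conn H x K)
  show ?case by (rule construction_inv_insert_carrier[OF conn.hyps(1,2,5) conn.IH])
next
  case (disc H P Ks)
  show ?case
    by (rule construction_inv_union[OF disc.hyps(1)])
      (use disc.hyps(4) disc.IH in \<open>auto simp: finest_hpartition_def\<close>)
qed

subsection \<open>Completeness: the antichain condition yields a construction\<close>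

definition admissible :: "'a set set \<Rightarrow> 'a set set \<Rightarrow> bool" where
  "admissible H M \<longleftrightarrow> M \<subseteq> H \<and> antichains_miss H M \<and> card M = card (\<Union>H)"

definition components :: "'a set set \<Rightarrow> 'a set set set" where
  "components H = (\<lambda>Z. restr H Z) ` maximal_members H"

lemma maximal_member_unique:
  assumes "hypergraph H" "saturated H" "X \<in> H"
    and "Z1 \<in> maximal_members H" "Z2 \<in> maximal_members H" "X \<subseteq> Z1" "X \<subseteq> Z2"
  shows "Z1 = Z2"
proof (rule ccontr)
  assume "Z1 \<noteq> Z2"
  hence "Z1 \<inter> Z2 = {}" using maximal_members_disjoint assms(2,4,5) by blast
  moreover have "X \<noteq> {}" using assms(1,3) unfolding hypergraph_def by simp
  ultimately show False using assms(6,7) by blast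
qed

lemma Union_component:
  assumes "atomic H" "Z \<in> maximal_members H"
  shows "\<Union>(restr H Z) = Z"
proof (rule Union_restr[OF assms(1)])
  have "Z \<in> H" using assms(2) maximal_members_subset by blast
  thus "Z \<subseteq> \<Union>H" by blast
qed

lemma maximal_member_in_component: "Z \<in> maximal_members H \<Longrightarrow> Z \<in> restr H Z"
  using maximal_members_subset unfolding restr_def by blast

lemma restr_maximal_members_cover:
  assumes "finite H" "M \<subseteq> H"
  shows "M = (\<Union>Z\<in>maximal_members H. restr M Z)"
proof (intro equalityI subsetI)
  fix X assume X: "X \<in> M"
  then obtain Z where "Z \<in> maximal_members H" "X \<subseteq> Z"
    using maximal_member_above[OF assms(1)] assms(2) by blast
  thus "X \<in> (\<Union>Z\<in>maximal_members H. restr M Z)" using X unfolding restr_def by blast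
qed (use restr_subset in blast)

lemma restr_maximal_members_disjoint:
  assumes "hypergraph H" "saturated H" "M \<subseteq> H"
    and "Z1 \<in> maximal_members H" "Z2 \<in> maximal_members H" "Z1 \<noteq> Z2"
  shows "restr M Z1 \<inter> restr M Z2 = {}"
proof (intro equalityI subsetI)
  fix X assume "X \<in> restr M Z1 \<inter> restr M Z2"
  hence "X \<in> H" "X \<subseteq> Z1" "X \<subseteq> Z2" using assms(3) unfolding restr_def by auto
  thus "X \<in> {}" using maximal_member_unique[OF assms(1,2) _ assms(4,5)] assms(6) by blast
qed simp

lemma hpartition_components:
  assumes hyp: "hypergraph H" and at: "atomic H" and sat: "saturated H"
  shows "hpartition H (components H)"
proof -
  let ?Zs = "maximal_members H"
  have finH: "finite H" using hyp unfolding hypergraph_def by simp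
  have UP: "Union ` components H = ?Zs"
    unfolding components_def image_image using Union_component[OF at] by simp
  have "partition_on H (components H)"
  proof (rule partition_onI)
    show "\<Union>(components H) = H"
      using restr_maximal_members_cover[OF finH order_refl] unfolding components_def by simp
    show "disjnt p q" if "p \<in> components H" "q \<in> components H" "p \<noteq> q" for p q
      using that restr_maximal_members_disjoint[OF hyp sat order_refl]
      unfolding components_def disjnt_def by blast
    show "{} \<notin> components H"
      using maximal_member_in_component unfolding components_def by blast
  qed
  moreover have "partition_on (\<Union>H) (Union ` components H)"
    unfolding UP
  proof (rule partition_onI)
    show "\<Union>?Zs = \<Union>H" by (rule Union_maximal_members[OF finH])
    show "disjnt p q" if "p \<in> ?Zs" "q \<in> ?Zs" "p \<noteq> q" for p q
      using maximal_members_disjoint[OF sat that] unfolding disjnt_def .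
    show "{} \<notin> ?Zs" using hyp maximal_members_subset unfolding hypergraph_def by blast
  qed
  moreover have "inj_on Union (components H)"
    unfolding components_def by (rule inj_onI) (metis Union_component[OF at] imageE)
  ultimately show ?thesis unfolding hpartition_def by simp
qed

lemma finest_hpartition_components:
  assumes "hypergraph H" "atomic H" "saturated H"
  shows "finest_hpartition H (components H)"
  unfolding finest_hpartition_def
proof
  show "hpartition H (components H)" by (rule hpartition_components[OF assms])
  show "\<forall>B\<in>components H. hconnected B"
  proof
    fix B assume "B \<in> components H"
    then obtain Z where Z: "Z \<in> maximal_members H" and B: "B = restr H Z"
      unfolding components_def by blast
    have "\<Union>B \<in> B"
      using Union_component[OF assms(2) Z] maximal_member_in_component[OF Z] B by simp
    thus "hconnected B" using hconnected_if_carrier_edge hypergraph_restr[OF assms(1)] B by blast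
  qed
qed

(* Counting: under condition (a), M has exactly |Z| members below each maximal
   edge Z, since |restr M Z| \<le> |Z| for all Z and both sides sum to |\<Union>H|. *)
lemma card_restr_maximal_member:
  assumes hyp: "hypergraph H" and sat: "saturated H" and adm: "admissible H M"
    and Z: "Z \<in> maximal_members H"
  shows "card (restr M Z) = card Z"
proof -
  let ?Zs = "maximal_members H"
  have MH: "M \<subseteq> H" and anti: "antichains_miss H M" and cM: "card M = card (\<Union>H)"
    using adm unfolding admissible_def by auto
  have finH: "finite H" and finE: "\<And>X. X \<in> H \<Longrightarrow> finite X"
    using hyp unfolding hypergraph_def by auto
  have finZs: "finite ?Zs" using finH maximal_members_subset finite_subset by metis
  have ZsH: "?Zs \<subseteq> H" by (rule maximal_members_subset)
  have le: "card (restr M Z') \<le> card Z'" if "Z' \<in> ?Zs" for Z'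
  proof -
    have "card (restr M Z') \<le> card (\<Union>(restr M Z'))"
      using card_le_card_Union[OF hyp sat _ antichains_miss_mono[OF anti restr_subset order_refl]]
        MH restr_subset by blast
    also have "\<dots> \<le> card Z'"
      using finE ZsH that by (intro card_mono) (auto simp: restr_def)
    finally show ?thesis .
  qed
  have finM: "finite (restr M Z')" for Z'
    using finH MH restr_subset finite_subset by metis
  have "(\<Sum>Z'\<in>?Zs. card (restr M Z')) = card (\<Union>Z'\<in>?Zs. restr M Z')"
    using restr_maximal_members_disjoint[OF hyp sat MH] finM
    by (intro card_UN_disjoint[symmetric] finZs) auto
  also have "\<dots> = card (\<Union>H)"
    using restr_maximal_members_cover[OF finH MH] cM by simp
  also have "\<dots> = card (\<Union>Z'\<in>?Zs. Z')" using Union_maximal_members[OF finH] by simp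
  also have "\<dots> = (\<Sum>Z'\<in>?Zs. card Z')"
    using maximal_members_disjoint[OF sat] finE ZsH by (intro card_UN_disjoint finZs) auto
  finally show ?thesis
    using sum_mono_inv[of "\<lambda>Z'. card (restr M Z')" ?Zs card, OF _ le Z finZs] by simp
qed

(* When the carrier V is an edge, an admissible M contains V, and some point of V
   is covered by no other member: the counting bound forces \<Union>M = V, and a union
   of members that lies in H is itself a member. *)
lemma carrier_edge_in_admissible:
  assumes hyp: "hypergraph H" and sat: "saturated H"
    and adm: "admissible H M" and VH: "\<Union>H \<in> H"
  shows "\<Union>H \<in> M" and "\<exists>x\<in>\<Union>H. x \<notin> \<Union>(M - {\<Union>H})"
proof -
  define V where "V = \<Union>H"
  have MH: "M \<subseteq> H" and anti: "antichains_miss H M" and cM: "card M = card V"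
    using adm unfolding admissible_def V_def by auto
  have finV: "finite V" and Vne: "V \<noteq> {}" and finM: "finite M"
    using hyp VH MH finite_subset unfolding hypergraph_def V_def by auto
  have "\<Union>M \<subseteq> V" using MH unfolding V_def by auto
  moreover have "card V \<le> card (\<Union>M)"
    using card_le_card_Union[OF hyp sat MH anti] cM by simp
  ultimately have UM: "\<Union>M = V" using finV card_seteq by blast
  thus "\<Union>H \<in> M" using Union_in_family[OF anti order_refl finM] VH Vne V_def by simp
  define K where "K = M - {V}"
  have KM: "K \<subseteq> M" and finK: "finite K" using finM unfolding K_def by auto
  have "\<Union>K \<noteq> V"
  proof
    assume "\<Union>K = V"
    hence "V \<in> K" using Union_in_family[OF anti KM finK] VH Vne V_def by simp
    thus False unfolding K_def by simp
  qed
  moreover have "\<Union>K \<subseteq> V" using UM KM by auto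
  ultimately show "\<exists>x\<in>\<Union>H. x \<notin> \<Union>(M - {\<Union>H})" unfolding K_def V_def by blast
qed

(* Inductive step when the carrier V is an edge: remove V from M and a point x
   used only by V from the carrier; the rest of M is admissible for H restricted
   to V - {x}, and M arises from its construction by adding V on top. *)
lemma construction_carrier_edge:
  fixes H M :: "'a set set"
  assumes IH: "\<And>H' M' :: 'a set set. card (\<Union>H') < card (\<Union>H) \<Longrightarrow> hypergraph H' \<Longrightarrow> atomic H'
      \<Longrightarrow> saturated H' \<Longrightarrow> admissible H' M' \<Longrightarrow> construction H' M'"
    and hyp: "hypergraph H" and at: "atomic H" and sat: "saturated H"
    and adm: "admissible H M" and VH: "\<Union>H \<in> H"
  shows "construction H M"
proof -
  define V where "V = \<Union>H"
  define K where "K = M - {V}"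
  have MH: "M \<subseteq> H" and anti: "antichains_miss H M" and cM: "card M = card V"
    using adm unfolding admissible_def V_def by auto
  have finV: "finite V" and finM: "finite M"
    using hyp MH finite_subset unfolding hypergraph_def V_def by auto
  have VM: "V \<in> M" using carrier_edge_in_admissible(1)[OF hyp sat adm VH] V_def by simp
  obtain x where xV: "x \<in> V" and xK: "x \<notin> \<Union>K"
    using carrier_edge_in_admissible(2)[OF hyp sat adm VH] unfolding K_def V_def by blast
  define H' where "H' = restr H (V - {x})"
  have UH': "\<Union>H' = V - {x}" unfolding H'_def V_def by (rule Union_restr[OF at]) auto
  have KM: "K \<subseteq> M" unfolding K_def by auto
  have "K \<subseteq> H'" using KM MH xK unfolding H'_def restr_def V_def by blast
  moreover have "antichains_miss H' K"
    using antichains_miss_mono[OF anti KM] restr_subset unfolding H'_def by blast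
  moreover have "card K = card (\<Union>H')"
    using cM VM finM UH' xV unfolding K_def by simp
  ultimately have admK: "admissible H' K" unfolding admissible_def by simp
  have smaller: "card (\<Union>H') < card (\<Union>H)"
    using UH' card_Diff1_less[OF finV xV] unfolding V_def by simp
  have "construction H' K"
    by (rule IH[OF smaller _ _ _ admK])
      (simp_all add: H'_def hypergraph_restr[OF hyp] atomic_restr[OF at] saturated_restr[OF sat])
  hence "construction H (insert V K)"
    using construction.conn[OF hyp at _ hconnected_if_carrier_edge[OF hyp VH], of x K] xV
    unfolding H'_def V_def by auto
  moreover have "insert V K = M" using VM unfolding K_def by auto
  ultimately show ?thesis by simp
qed

(* If the carrier is not an edge, H has at least two components (a single one
   would have the carrier as its maximal edge), so H is not connected. *)
lemma two_components:
  assumes hyp: "hypergraph H" and at: "atomic H" and VnH: "\<Union>H \<notin> H" and Hne: "H \<noteq> {}"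
  shows "2 \<le> card (components H)"
proof -
  let ?Zs = "maximal_members H"
  have finH: "finite H" and Une: "\<Union>H \<noteq> {}" using hyp Hne unfolding hypergraph_def by auto
  have finZs: "finite ?Zs" using finH maximal_members_subset finite_subset by metis
  have UZs: "\<Union>?Zs = \<Union>H" by (rule Union_maximal_members[OF finH])
  have "card ?Zs \<noteq> 0" using finZs UZs Une by auto
  moreover have "card ?Zs \<noteq> 1" using UZs VnH maximal_members_subset by (force simp: card_Suc_eq)
  moreover have "card (components H) = card ?Zs"
    unfolding components_def
    by (rule card_image, rule inj_onI) (metis Union_component[OF at])
  ultimately show ?thesis by simp
qed

lemma admissible_component:
  assumes hyp: "hypergraph H" and at: "atomic H" and sat: "saturated H"
    and adm: "admissible H M" and Z: "Z \<in> maximal_members H"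
  shows "admissible (restr H Z) (restr M Z)"
proof -
  have MH: "M \<subseteq> H" and anti: "antichains_miss H M" using adm unfolding admissible_def by auto
  have "restr M Z \<subseteq> restr H Z" using MH unfolding restr_def by blast
  moreover have "antichains_miss (restr H Z) (restr M Z)"
    by (rule antichains_miss_mono[OF anti restr_subset restr_subset])
  moreover have "card (restr M Z) = card (\<Union>(restr H Z))"
    using card_restr_maximal_member[OF hyp sat adm Z] Union_component[OF at Z] by simp
  ultimately show ?thesis unfolding admissible_def by simp
qed

(* Inductive step when the carrier is not an edge: H is disconnected, its
   components form the finest hypergraph partition, each is strictly smaller,
   and M is glued from constructions of its restrictions to the components. *)
lemma construction_components:
  fixes H M :: "'a set set"
  assumes IH: "\<And>H' M' :: 'a set set. card (\<Union>H') < card (\<Union>H) \<Longrightarrow> hypergraph H' \<Longrightarrow> atomic H'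
      \<Longrightarrow> saturated H' \<Longrightarrow> admissible H' M' \<Longrightarrow> construction H' M'"
    and hyp: "hypergraph H" and at: "atomic H" and sat: "saturated H"
    and adm: "admissible H M" and VnH: "\<Union>H \<notin> H" and Hne: "H \<noteq> {}"
  shows "construction H M"
proof -
  have finH: "finite H" and finU: "finite (\<Union>H)" using hyp unfolding hypergraph_def by auto
  have MH: "M \<subseteq> H" using adm unfolding admissible_def by simp
  have two: "2 \<le> card (components H)" by (rule two_components[OF hyp at VnH Hne])
  have fin: "finest_hpartition H (components H)" by (rule finest_hpartition_components[OF hyp at sat])
  have ncon: "\<not> hconnected H"
  proof
    assume "hconnected H"
    hence "components H = {H}"
      using fin hpartition_trivial[OF hyp Hne] unfolding hconnected_def finest_hpartition_def by blast
    thus False using two by simp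
  qed
  have parts: "construction B (restr M (\<Union>B))" if inB: "B \<in> components H" for B
  proof -
    obtain Z where Z: "Z \<in> maximal_members H" and B: "B = restr H Z"
      using inB unfolding components_def by blast
    have UB: "\<Union>B = Z" using Union_component[OF at Z] B by simp
    have "Z \<in> H" using Z maximal_members_subset by blast
    hence "Z \<subset> \<Union>H" using VnH by blast
    hence smaller: "card (\<Union>B) < card (\<Union>H)" using psubset_card_mono[OF finU] UB by simp
    show ?thesis
      using IH[OF smaller] admissible_component[OF hyp at sat adm Z]
        hypergraph_restr[OF hyp] atomic_restr[OF at] saturated_restr[OF sat] UB B
      by simp
  qed
  have "construction H (\<Union>B\<in>components H. restr M (\<Union>B))"
    by (rule construction.disc[OF hyp at ncon fin two]) (use parts in blast)
  moreover have "(\<Union>B\<in>components H. restr M (\<Union>B)) = M"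
    using restr_maximal_members_cover[OF finH MH] Union_component[OF at]
    unfolding components_def by simp
  ultimately show ?thesis by simp
qed

lemma construction_if_admissible:
  fixes H M :: "'a set set"
  assumes "hypergraph H" "atomic H" "saturated H" "admissible H M"
  shows "construction H M"
  using assms
proof (induction "card (\<Union>H)" arbitrary: H M rule: less_induct)
  case less
  consider "H = {}" | "\<Union>H \<in> H" | "\<Union>H \<notin> H" "H \<noteq> {}" by blast
  thus ?case
  proof cases
    case 1
    hence "M = {}" using less.prems(4) unfolding admissible_def by blast
    thus ?thesis using 1 construction.empty by simp
  next
    case 2
    show ?thesis by (rule construction_carrier_edge[OF less.hyps less.prems 2])
  next
    case 3
    show ?thesis by (rule construction_components[OF less.hyps less.prems 3])
  qed
qed

theorem proposition6p11:
  fixes H M :: "'a set set"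
  assumes "hypergraph H" and "ASC H" and "M \<subseteq> H"
  shows "((\<forall>S. antichain M S \<longrightarrow> misses H S) \<and> card M = card (\<Union>H))
         \<longleftrightarrow> construction H M"
proof
  assume "(\<forall>S. antichain M S \<longrightarrow> misses H S) \<and> card M = card (\<Union>H)"
  hence "admissible H M" using assms(3) unfolding admissible_def antichains_miss_def by simp
  thus "construction H M"
    using construction_if_admissible assms(1,2) unfolding ASC_def by blast
next
  assume "construction H M"
  hence "construction_inv H M" by (rule construction_inv_if_construction)
  thus "(\<forall>S. antichain M S \<longrightarrow> misses H S) \<and> card M = card (\<Union>H)"
    unfolding construction_inv_def antichains_miss_def by simp
qed

end
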